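(* Existential second-order universal Horn logic does not capture the complexity class $\mathbf{P}$, even when restricted to finite input structures whose vocabulary includes a successor relation: there is a decision problem on such structures that is decidable in polynomial time but is not expressible by any ESO universal Horn sentence.
   Context: ESO universal Horn logic consists of sentences of the form $\exists S_1 \cdots \exists S_m\, \forall \bar{x}\, \psi$, where $S_1,\dots,S_m$ are second-order (relation) variables and $\forall \bar x\,\psi$ is a universal first-order formula whose matrix $\psi$ is a conjunction of Horn clauses with respect to the quantified relations $S_i$ (each clause contains at most one positive occurrence of an atom built from an $S_i$; atoms and negated atoms over the input vocabulary are unrestricted). A decision problem (a class of finite structures over a fixed input vocabulary) is expressed by such a sentence if a finite input structure is a yes-instance exactly when it satisfies the sentence. A successor relation is a binary relation in the input vocabulary interpreted as the successor relation of a linear order on the universe. $\mathbf{P}$ is the class of problems decidable in polynomial time. *)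

theory Defs
  imports Main
begin

text \<open>A vocabulary is a list of arities; relation symbol i has arity ar!i.
  A fstruct is a pair (n, rels): universe {0..<n} (n > 0) and rels i the
  interpretation of symbol i, a set of tuples (lists) of length ar!i.\<close>

type_synonym fstruct = "nat \<times> (nat \<Rightarrow> nat list set)"

definition univ :: "fstruct \<Rightarrow> nat" where "univ A = fst A"
definition rel :: "fstruct \<Rightarrow> nat \<Rightarrow> nat list set" where "rel A = snd A"

definition tuples :: "nat \<Rightarrow> nat \<Rightarrow> nat list set" where
  "tuples n k = {t. length t = k \<and> set t \<subseteq> {0..<n}}"

definition is_structure :: "nat list \<Rightarrow> fstruct \<Rightarrow> bool" where
  "is_structure ar A \<longleftrightarrow> 0 < univ A \<and>
     (\<forall>i < length ar. rel A i \<subseteq> tuples (univ A) (ar ! i)) \<and>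
     (\<forall>i \<ge> length ar. rel A i = {})"

definition is_successor :: "nat \<Rightarrow> nat list set \<Rightarrow> bool" where
  "is_successor n R \<longleftrightarrow> (\<exists>f. bij_betw f {0..<n} {0..<n} \<and>
      R = {[f i, f (Suc i)] | i. Suc i < n})"

definition succ_structure :: "nat list \<Rightarrow> nat \<Rightarrow> fstruct \<Rightarrow> bool" where
  "succ_structure ar s A \<longleftrightarrow> is_structure ar A \<and> is_successor (univ A) (rel A s)"

definition isomorphic :: "nat list \<Rightarrow> fstruct \<Rightarrow> fstruct \<Rightarrow> bool" where
  "isomorphic ar A B \<longleftrightarrow> univ A = univ B \<and>
     (\<exists>f. bij_betw f {0..<univ A} {0..<univ B} \<and>
          (\<forall>i < length ar. rel B i = map f ` rel A i))"

definition decision_problem :: "nat list \<Rightarrow> nat \<Rightarrow> fstruct set \<Rightarrow> bool" where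
  "decision_problem ar s \<Pi> \<longleftrightarrow>
     (\<forall>A \<in> \<Pi>. succ_structure ar s A) \<and>
     (\<forall>A B. A \<in> \<Pi> \<longrightarrow> succ_structure ar s B \<longrightarrow> isomorphic ar A B \<longrightarrow> B \<in> \<Pi>)"

fun enum_tuples :: "nat \<Rightarrow> nat \<Rightarrow> nat list list" where
  "enum_tuples n 0 = [[]]"
| "enum_tuples n (Suc k) = concat (map (\<lambda>i. map (Cons i) (enum_tuples n k)) [0..<n])"

definition encode :: "nat list \<Rightarrow> fstruct \<Rightarrow> bool list" where
  "encode ar A = replicate (univ A) True @ [False] @
     concat (map (\<lambda>i. map (\<lambda>t. t \<in> rel A i) (enum_tuples (univ A) (ar ! i))) [0..<length ar])"

datatype dir = Lft | Rgt | Stay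

text \<open>Transition function: state \<Rightarrow> read symbol \<Rightarrow> (new state, written symbol, move).
  State 0 is initial, 1 accepting, 2 rejecting (1 and 2 halt).
  Symbol 0 is blank, input bit False is symbol 1, True is symbol 2.
  The tape is one-way infinite (cells nat); moving left at cell 0 stays.\<close>
type_synonym tm = "nat \<Rightarrow> nat \<Rightarrow> nat \<times> nat \<times> dir"
type_synonym config = "nat \<times> (nat \<Rightarrow> nat) \<times> nat"

definition tm_finite :: "nat \<Rightarrow> nat \<Rightarrow> tm \<Rightarrow> bool" where
  "tm_finite Q K \<delta> \<longleftrightarrow> 3 \<le> Q \<and> 3 \<le> K \<and>
     (\<forall>q < Q. \<forall>a < K. fst (\<delta> q a) < Q \<and> fst (snd (\<delta> q a)) < K)"

fun move :: "dir \<Rightarrow> nat \<Rightarrow> nat" where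
  "move Lft h = h - 1"
| "move Rgt h = Suc h"
| "move Stay h = h"

definition tm_step :: "tm \<Rightarrow> config \<Rightarrow> config" where
  "tm_step \<delta> c = (case c of (q, tp, h) \<Rightarrow>
     if q = 1 \<or> q = 2 then (q, tp, h)
     else (case \<delta> q (tp h) of (q', a, d) \<Rightarrow> (q', tp(h := a), move d h)))"

definition tm_init :: "bool list \<Rightarrow> config" where
  "tm_init w = (0, (\<lambda>i. if i < length w then (if w ! i then 2 else 1) else 0), 0)"

definition tm_run :: "tm \<Rightarrow> bool list \<Rightarrow> nat \<Rightarrow> config" where
  "tm_run \<delta> w t = (tm_step \<delta> ^^ t) (tm_init w)"

definition poly_time_decides :: "tm \<Rightarrow> bool list set \<Rightarrow> bool" where
  "poly_time_decides \<delta> L \<longleftrightarrow> (\<exists>c k::nat. \<forall>w. \<exists>t. t \<le> c * length w ^ k + c \<and>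
      fst (tm_run \<delta> w t) \<in> {1, 2} \<and> (fst (tm_run \<delta> w t) = 1 \<longleftrightarrow> w \<in> L))"

definition in_P :: "bool list set \<Rightarrow> bool" where
  "in_P L \<longleftrightarrow> (\<exists>Q K \<delta>. tm_finite Q K \<delta> \<and> poly_time_decides \<delta> L)"

definition problem_in_P :: "nat list \<Rightarrow> fstruct set \<Rightarrow> bool" where
  "problem_in_P ar \<Pi> \<longleftrightarrow> in_P (encode ar ` \<Pi>)"

text \<open>Atoms: input relation i applied to first-order variables, second-order
  variable j applied to first-order variables, equality of variables.\<close>
datatype atom = InRel nat "nat list" | SoRel nat "nat list" | Eq nat nat
datatype lit = Pos atom | Neg atom

text \<open>ESOUH sar k M: \<exists>S_0..S_(m-1) (arities sar) \<forall>x_0..x_(k-1). \<And> clauses M,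
  each clause a disjunction of literals.\<close>
datatype esouh = ESOUH "nat list" nat "lit list list"

fun wf_atom :: "nat list \<Rightarrow> nat list \<Rightarrow> nat \<Rightarrow> atom \<Rightarrow> bool" where
  "wf_atom ar sar k (InRel i xs) \<longleftrightarrow> i < length ar \<and> length xs = ar ! i \<and> (\<forall>x \<in> set xs. x < k)"
| "wf_atom ar sar k (SoRel j xs) \<longleftrightarrow> j < length sar \<and> length xs = sar ! j \<and> (\<forall>x \<in> set xs. x < k)"
| "wf_atom ar sar k (Eq x y) \<longleftrightarrow> x < k \<and> y < k"

fun lit_atom :: "lit \<Rightarrow> atom" where
  "lit_atom (Pos a) = a" | "lit_atom (Neg a) = a"

fun so_pos :: "lit \<Rightarrow> bool" where
  "so_pos (Pos (SoRel _ _)) = True"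
| "so_pos _ = False"

definition horn_clause :: "lit list \<Rightarrow> bool" where
  "horn_clause C \<longleftrightarrow> length (filter so_pos C) \<le> 1"

fun esouh_sentence :: "nat list \<Rightarrow> esouh \<Rightarrow> bool" where
  "esouh_sentence ar (ESOUH sar k M) \<longleftrightarrow>
     (\<forall>C \<in> set M. horn_clause C \<and> (\<forall>l \<in> set C. wf_atom ar sar k (lit_atom l)))"

fun eval_atom :: "fstruct \<Rightarrow> (nat \<Rightarrow> nat list set) \<Rightarrow> (nat \<Rightarrow> nat) \<Rightarrow> atom \<Rightarrow> bool" where
  "eval_atom A S v (InRel i xs) \<longleftrightarrow> map v xs \<in> rel A i"
| "eval_atom A S v (SoRel j xs) \<longleftrightarrow> map v xs \<in> S j"
| "eval_atom A S v (Eq x y) \<longleftrightarrow> v x = v y"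

fun eval_lit :: "fstruct \<Rightarrow> (nat \<Rightarrow> nat list set) \<Rightarrow> (nat \<Rightarrow> nat) \<Rightarrow> lit \<Rightarrow> bool" where
  "eval_lit A S v (Pos a) \<longleftrightarrow> eval_atom A S v a"
| "eval_lit A S v (Neg a) \<longleftrightarrow> \<not> eval_atom A S v a"

fun satisfies :: "fstruct \<Rightarrow> esouh \<Rightarrow> bool" where
  "satisfies A (ESOUH sar k M) \<longleftrightarrow>
     (\<exists>S. (\<forall>j < length sar. S j \<subseteq> tuples (univ A) (sar ! j)) \<and>
          (\<forall>v. (\<forall>i < k. v i < univ A) \<longrightarrow>
               (\<forall>C \<in> set M. \<exists>l \<in> set C. eval_lit A S v l)))"

definition expresses :: "nat list \<Rightarrow> nat \<Rightarrow> esouh \<Rightarrow> fstruct set \<Rightarrow> bool" where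
  "expresses ar s \<phi> \<Pi> \<longleftrightarrow> (\<forall>A. succ_structure ar s A \<longrightarrow> (A \<in> \<Pi> \<longleftrightarrow> satisfies A \<phi>))"

end

theory Submission
  imports Defs "HOL-Library.Nat_Bijection"
begin

text \<open>An existential second-order universal sentence, Horn or not, is preserved under
  induced substructures: restrict the witnessing relations to the smaller universe. Since the
  vocabulary has no constants for the endpoints of the successor relation, an initial segment of
  a successor chain is again a successor structure, so every expressible problem containing the
  two-element chain also contains the one-element one. The problem ``the universe has exactly two
  elements'' therefore is not expressible, although it consists of finitely many structures and
  its encodings form a finite language, which one left-to-right scan decides.\<close>

definition induced_substructure :: "nat list \<Rightarrow> fstruct \<Rightarrow> fstruct \<Rightarrow> bool" where
  "induced_substructure ar B A \<longleftrightarrow> univ B \<le> univ A \<and>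
     (\<forall>i < length ar. rel B i = rel A i \<inter> tuples (univ B) (ar ! i))"

lemma eval_atom_induced_substructure:
  assumes sub: "induced_substructure ar B A" and wf: "wf_atom ar sar k a"
    and v: "\<forall>i < k. v i < univ B"
  shows "eval_atom B (\<lambda>j. S j \<inter> tuples (univ B) (sar ! j)) v a = eval_atom A S v a"
proof -
  have "set (map v xs) \<subseteq> {0..<univ B}" if "\<forall>x \<in> set xs. x < k" for xs
    using that v by auto
  then show ?thesis
    using sub wf by (cases a) (auto simp: induced_substructure_def tuples_def)
qed

lemma satisfies_induced_substructure:
  assumes "esouh_sentence ar \<phi>" "induced_substructure ar B A" "satisfies A \<phi>"
  shows "satisfies B \<phi>"
proof (cases \<phi>)
  case (ESOUH sar k M)
  from assms(3) ESOUH obtain S where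
    S: "\<forall>v. (\<forall>i < k. v i < univ A) \<longrightarrow> (\<forall>C \<in> set M. \<exists>l \<in> set C. eval_lit A S v l)"
    by auto
  define S' where "S' = (\<lambda>j. S j \<inter> tuples (univ B) (sar ! j))"
  have "\<exists>l \<in> set C. eval_lit B S' v l"
    if v: "\<forall>i < k. v i < univ B" and C: "C \<in> set M" for v C
  proof -
    have "\<forall>i < k. v i < univ A"
      using v assms(2) by (auto simp: induced_substructure_def)
    with S C obtain l where l: "l \<in> set C" "eval_lit A S v l" by blast
    have "wf_atom ar sar k (lit_atom l)" using assms(1) ESOUH C l(1) by auto
    with l(2) have "eval_lit B S' v l"
      using eval_atom_induced_substructure[OF assms(2) _ v, of sar "lit_atom l" S]
      unfolding S'_def by (cases l) auto
    with l(1) show ?thesis by blast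
  qed
  moreover have "\<forall>j < length sar. S' j \<subseteq> tuples (univ B) (sar ! j)"
    by (simp add: S'_def)
  ultimately show ?thesis unfolding ESOUH satisfies.simps by blast
qed

definition successor_chain :: "nat \<Rightarrow> fstruct" where
  "successor_chain n = (n, \<lambda>i. if i = 0 then {[j, Suc j] | j. Suc j < n} else {})"

lemma succ_structure_successor_chain:
  assumes "0 < n" shows "succ_structure [2] 0 (successor_chain n)"
  using assms
  by (auto simp: succ_structure_def is_structure_def is_successor_def successor_chain_def
      univ_def rel_def tuples_def intro!: exI[of _ id])

lemma induced_substructure_successor_chain:
  assumes "m \<le> n" shows "induced_substructure [2] (successor_chain m) (successor_chain n)"
  using assms
  by (auto simp: induced_substructure_def successor_chain_def univ_def rel_def tuples_def)

lemma expressible_closed_under_chain_prefixes: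
  assumes "esouh_sentence [2] \<phi>" "expresses [2] 0 \<phi> \<Pi>"
    and "successor_chain n \<in> \<Pi>" "0 < m" "m \<le> n"
  shows "successor_chain m \<in> \<Pi>"
proof -
  have "succ_structure [2] 0 (successor_chain n)"
    using assms(4,5) by (intro succ_structure_successor_chain) simp
  then have "satisfies (successor_chain n) \<phi>"
    using assms(2,3) unfolding expresses_def by blast
  then have "satisfies (successor_chain m) \<phi>"
    using satisfies_induced_substructure[OF assms(1) induced_substructure_successor_chain]
      assms(5) by blast
  then show ?thesis
    using assms(2) succ_structure_successor_chain[OF assms(4)] unfolding expresses_def by blast
qed

lemma finite_tuples: "finite (tuples n k)"
  using finite_lists_length_eq[of "{0..<n}" k] by (simp add: tuples_def conj_commute)

lemma finite_structures_of_size: "finite {A. is_structure ar A \<and> univ A = n}"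
proof -
  let ?Str = "{A. is_structure ar A \<and> univ A = n}"
  let ?T = "\<Union>i < length ar. tuples n (ar ! i)"
  let ?code = "\<lambda>A. map (rel A) [0..<length ar]"
  have inj: "inj_on ?code ?Str"
  proof (rule inj_onI)
    fix A B assume A: "A \<in> ?Str" and B: "B \<in> ?Str" and eq: "?code A = ?code B"
    have "rel A i = rel B i" for i
      using A B nth_map_upt[of i "length ar" 0 "rel A"] nth_map_upt[of i "length ar" 0 "rel B"] eq
      by (cases "i < length ar") (auto simp: is_structure_def)
    with A B show "A = B" by (simp add: univ_def rel_def prod_eq_iff fun_eq_iff)
  qed
  have "?code ` ?Str \<subseteq> {xs. set xs \<subseteq> Pow ?T \<and> length xs = length ar}"
    by (fastforce simp: is_structure_def)
  moreover have "finite {xs. set xs \<subseteq> Pow ?T \<and> length xs = length ar}"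
    by (intro finite_lists_length_eq) (simp add: finite_tuples)
  ultimately have "finite (?code ` ?Str)"
    by (rule finite_subset)
  then show ?thesis
    using inj by (rule finite_imageD)
qed

definition size_problem :: "nat list \<Rightarrow> nat \<Rightarrow> nat \<Rightarrow> fstruct set" where
  "size_problem ar s n = {A. succ_structure ar s A \<and> univ A = n}"

lemma decision_problem_size_problem: "decision_problem ar s (size_problem ar s n)"
  by (auto simp: decision_problem_def size_problem_def isomorphic_def)

lemma finite_size_problem: "finite (size_problem ar s n)"
  by (rule finite_subset[OF _ finite_structures_of_size[of ar n]])
    (auto simp: size_problem_def succ_structure_def)

text \<open>A machine that always moves right runs a deterministic finite automaton on the tape
  contents.\<close>

definition sweep_tm :: "(nat \<Rightarrow> nat \<Rightarrow> nat) \<Rightarrow> tm" where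
  "sweep_tm N q a = (N q a, 0, Rgt)"

fun dfa_run :: "(nat \<Rightarrow> nat \<Rightarrow> nat) \<Rightarrow> nat \<Rightarrow> nat list \<Rightarrow> nat" where
  "dfa_run N q [] = q"
| "dfa_run N q (a # as) = (if q = 1 \<or> q = 2 then q else dfa_run N (N q a) as)"

lemma dfa_run_halted: "q = 1 \<or> q = 2 \<Longrightarrow> dfa_run N q as = q"
  by (cases as) auto

lemma tm_step_halted_funpow: "q = 1 \<or> q = 2 \<Longrightarrow> (tm_step \<delta> ^^ t) (q, tp, h) = (q, tp, h)"
  by (induction t) (auto simp: tm_step_def)

lemma sweep_tm_funpow:
  "fst ((tm_step (sweep_tm N) ^^ t) (q, tp, h)) = dfa_run N q (map tp [h..<h + t])"
proof (induction t arbitrary: q tp h)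
  case 0
  then show ?case by simp
next
  case (Suc t)
  show ?case
  proof (cases "q = 1 \<or> q = 2")
    case True
    then show ?thesis by (simp only: tm_step_halted_funpow[OF True]) (simp add: dfa_run_halted)
  next
    case False
    then have "tm_step (sweep_tm N) (q, tp, h) = (N q (tp h), tp(h := 0), Suc h)"
      by (simp add: tm_step_def sweep_tm_def)
    then have "fst ((tm_step (sweep_tm N) ^^ Suc t) (q, tp, h)) =
        dfa_run N (N q (tp h)) (map (tp(h := 0)) [Suc h..<Suc h + t])"
      by (simp only: funpow_Suc_right comp_def Suc.IH)
    also have "map (tp(h := 0)) [Suc h..<Suc h + t] = map tp [Suc h..<Suc h + t]"
      by simp
    also have "dfa_run N (N q (tp h)) (map tp [Suc h..<Suc h + t]) =
        dfa_run N q (map tp [h..<h + Suc t])"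
      using False by (simp add: upt_conv_Cons del: upt_Suc)
    finally show ?thesis .
  qed
qed

text \<open>A state encodes the bit string read so far; the initial state 0 encodes the
  empty string since list_decode maps 0 to the empty list.\<close>

definition prefix_state :: "bool list \<Rightarrow> nat" where
  "prefix_state p = 3 + list_encode (map of_bool p)"

definition state_prefix :: "nat \<Rightarrow> bool list" where
  "state_prefix q = map (\<lambda>n. n \<noteq> 0) (list_decode (q - 3))"

lemma state_prefix_prefix_state [simp]: "state_prefix (prefix_state p) = p"
  by (simp add: state_prefix_def prefix_state_def comp_def)

lemma prefix_state_ge_3: "3 \<le> prefix_state p"
  by (simp add: prefix_state_def)

lemma state_prefix_0: "state_prefix 0 = []"
  by (simp add: state_prefix_def)

definition language_transition :: "bool list set \<Rightarrow> nat \<Rightarrow> nat \<Rightarrow> nat" where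
  "language_transition L q a =
     (if a = 0 then (if state_prefix q \<in> L then 1 else 2)
      else if \<exists>u. (state_prefix q @ [a = 2]) @ u \<in> L then prefix_state (state_prefix q @ [a = 2])
      else 2)"

definition input_symbol :: "bool \<Rightarrow> nat" where
  "input_symbol b = (if b then 2 else 1)"

lemma dfa_run_language_transition:
  assumes "q \<noteq> 1" "q \<noteq> 2"
  shows "dfa_run (language_transition L) q (map input_symbol w @ [0]) =
           (if state_prefix q @ w \<in> L then 1 else 2)"
  using assms
proof (induction w arbitrary: q)
  case Nil
  then show ?case by (simp add: language_transition_def)
next
  case (Cons b w)
  let ?p = "state_prefix q @ [b]"
  show ?case
  proof (cases "\<exists>u. ?p @ u \<in> L")
    case True
    then have "language_transition L q (input_symbol b) = prefix_state ?p"
      by (cases b) (simp_all add: language_transition_def input_symbol_def)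
    moreover have "prefix_state ?p \<noteq> 1" "prefix_state ?p \<noteq> 2"
      using prefix_state_ge_3[of ?p] by auto
    ultimately show ?thesis
      using Cons.prems Cons.IH[of "prefix_state ?p"] by simp
  next
    case False
    then have "language_transition L q (input_symbol b) = 2"
      by (cases b) (simp_all add: language_transition_def input_symbol_def)
    moreover have "state_prefix q @ b # w \<notin> L"
      using False by (metis append.assoc append_Cons append_Nil)
    ultimately show ?thesis
      using Cons.prems by (simp add: dfa_run_halted)
  qed
qed

lemma tm_run_language_transition:
  "fst (tm_run (sweep_tm (language_transition L)) w (Suc (length w))) = (if w \<in> L then 1 else 2)"
proof -
  define tp where "tp = fst (snd (tm_init w))"
  have "tm_init w = (0, tp, 0)"
    by (simp add: tp_def tm_init_def)
  then have "fst (tm_run (sweep_tm (language_transition L)) w (Suc (length w))) =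
      dfa_run (language_transition L) 0 (map tp [0..<0 + Suc (length w)])"
    by (simp only: tm_run_def sweep_tm_funpow)
  also have "map tp [0..<0 + Suc (length w)] = map input_symbol w @ [0]"
    by (simp add: tp_def tm_init_def input_symbol_def list_eq_iff_nth_eq nth_append del: upt_Suc)
  finally show ?thesis
    by (simp add: dfa_run_language_transition state_prefix_0)
qed

lemma tm_finite_language_transition:
  assumes "finite L"
  shows "\<exists>Q. tm_finite Q 3 (sweep_tm (language_transition L))"
proof -
  let ?Live = "{p. \<exists>u. p @ u \<in> L}"
  have "?Live \<subseteq> {p. set p \<subseteq> UNIV \<and> length p \<le> Max (length ` L)}"
    using assms by (auto intro!: Max_ge[THEN le_trans[rotated]])
  then have "finite ?Live"
    by (rule finite_subset) (use finite_lists_length_le[of "UNIV :: bool set"] in simp)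
  define Q where "Q = Suc (Max (insert 2 (prefix_state ` ?Live)))"
  have "prefix_state p < Q" if "p \<in> ?Live" for p
    using that \<open>finite ?Live\<close> by (simp add: Q_def le_imp_less_Suc)
  moreover have "2 \<le> Max (insert 2 (prefix_state ` ?Live))"
    by (rule Max_ge) (simp_all add: \<open>finite ?Live\<close>)
  then have "2 < Q" "3 \<le> Q"
    by (simp_all add: Q_def)
  ultimately have "tm_finite Q 3 (sweep_tm (language_transition L))"
    unfolding tm_finite_def sweep_tm_def language_transition_def by auto
  then show ?thesis ..
qed

lemma finite_language_in_P:
  assumes "finite L" shows "in_P L"
proof -
  obtain Q where "tm_finite Q 3 (sweep_tm (language_transition L))"
    using tm_finite_language_transition[OF assms] ..
  moreover have "poly_time_decides (sweep_tm (language_transition L)) L"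
    unfolding poly_time_decides_def
  proof (rule exI[of _ 1], rule exI[of _ 1], rule allI)
    fix w :: "bool list"
    show "\<exists>t. t \<le> 1 * length w ^ 1 + 1 \<and>
        fst (tm_run (sweep_tm (language_transition L)) w t) \<in> {1, 2} \<and>
        (fst (tm_run (sweep_tm (language_transition L)) w t) = 1 \<longleftrightarrow> w \<in> L)"
      by (intro exI[of _ "Suc (length w)"]) (simp add: tm_run_language_transition)
  qed
  ultimately show ?thesis unfolding in_P_def by blast
qed

theorem theorem1:
  shows "\<exists>ar s \<Pi>. s < length ar \<and> ar ! s = 2 \<and> decision_problem ar s \<Pi> \<and>
           problem_in_P ar \<Pi> \<and>
           \<not> (\<exists>\<phi>. esouh_sentence ar \<phi> \<and> expresses ar s \<phi> \<Pi>)"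
proof (intro exI conjI)
  let ?\<Pi> = "size_problem [2] 0 2"
  show "decision_problem [2] 0 ?\<Pi>" by (rule decision_problem_size_problem)
  show "problem_in_P [2] ?\<Pi>"
    unfolding problem_in_P_def by (intro finite_language_in_P finite_imageI finite_size_problem)
  show "\<not> (\<exists>\<phi>. esouh_sentence [2] \<phi> \<and> expresses [2] 0 \<phi> ?\<Pi>)"
  proof
    assume "\<exists>\<phi>. esouh_sentence [2] \<phi> \<and> expresses [2] 0 \<phi> ?\<Pi>"
    then obtain \<phi> where "esouh_sentence [2] \<phi>" "expresses [2] 0 \<phi> ?\<Pi>" by blast
    moreover have "successor_chain 2 \<in> ?\<Pi>"
      using succ_structure_successor_chain[of 2]
      by (simp add: size_problem_def successor_chain_def univ_def)
    ultimately have "successor_chain 1 \<in> ?\<Pi>"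
      by (rule expressible_closed_under_chain_prefixes) simp_all
    then show False by (simp add: size_problem_def successor_chain_def univ_def)
  qed
qed simp_all

end
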